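(* In the single parameter setting with Greedy, against a perturbed adversary satisfying $(r,\lambda_0)$ diversity, for all $i,t$, \[ \lambda_{\min}\left(\mathbb{E}\left[x_i^t(x_i^t)^\top\,\middle|\,i^t=i,\ \hat c_i^t\text{ is }r\text{-good}\right]\right)\ge\lambda_0, \] where the expectation is over the perturbations of round $t$, with the history, $\hat\beta^t$ and $\mu_1^t,\dots,\mu_k^t$ fixed.
   Context: Single parameter setting: unknown $\beta\in\mathbb{R}^d$; in round $t$ contexts $x_1^t,\dots,x_k^t$ are presented, Greedy computes the least squares estimate $\hat\beta^t$ from previously chosen contexts and rewards and picks $i^t=\arg\max_i\hat\beta^t\cdot x_i^t$. Perturbed adversary: each round, an adaptive adversary (given the history) picks $\mu_1^t,\dots,\mu_k^t$ with $\|\mu_i^t\|\le1$, and $x_i^t=\mu_i^t+e_i^t$ where $e_i^t\sim\mathcal{D}_i^t$ are mean-zero, independent of each other and of the adversary's choices given the history. A distribution $\mathcal{D}$ is $(r,\lambda_0)$-diverse if for all $\hat\beta$, $\|\mu\|\le1$, $\hat b\le r\|\hat\beta\|$, with $e\sim\mathcal{D}$ and $x=\mu+e$: $\lambda_{\min}(\mathbb{E}[xx^\top\mid\hat\beta\cdot e\ge\hat b])\ge\lambda_0$; the adversary satisfies $(r,\lambda_0)$ diversity if every $\mathcal{D}_i^t$ does. Threshold: $\hat c_i^t=\max_{j\neq i}\hat\beta^t\cdot x_j^t$; a realization of $\hat c_i^t$ is $r$-good (for arm $i$) if $\hat c_i^t\le\hat\beta^t\cdot\mu_i^t+r\|\hat\beta^t\|$.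 *)

theory Defs
  imports "HOL-Probability.Probability"
begin

definition outer :: "real^'d \<Rightarrow> real^'d^'d" where
  "outer x = (\<chi> i j. x $ i * x $ j)"

definition lambda_min :: "real^'d^'d \<Rightarrow> real" where
  "lambda_min M = Min {l. \<exists>v. v \<noteq> 0 \<and> M *v v = l *\<^sub>R v}"

definition cond_expect_on :: "'a measure \<Rightarrow> 'a set \<Rightarrow> ('a \<Rightarrow> 'b::{banach,second_countable_topology}) \<Rightarrow> 'b" where
  "cond_expect_on M A f = (1 / measure M A) *\<^sub>R (\<integral>\<omega>. indicator A \<omega> *\<^sub>R f \<omega> \<partial>M)"

definition diverse :: "real \<Rightarrow> real \<Rightarrow> (real^'d) measure \<Rightarrow> bool" where
  "diverse r l0 D \<longleftrightarrow>
     (\<forall>(\<beta>::real^'d) (\<mu>::real^'d) (bh::real).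
        norm \<mu> \<le> 1 \<longrightarrow> bh \<le> r * norm \<beta> \<longrightarrow>
        l0 \<le> lambda_min (cond_expect_on D {e \<in> space D. \<beta> \<bullet> e \<ge> bh} (\<lambda>e. outer (\<mu> + e))))"

text \<open>Realization of c_hat_i = max_{j \<noteq> i} beta.x_j is r-good for arm i
  (written without Max; with no other arm the max is -infinity, always good).\<close>
definition r_good :: "real \<Rightarrow> nat \<Rightarrow> real^'d \<Rightarrow> (nat \<Rightarrow> real^'d) \<Rightarrow> (nat \<Rightarrow> real^'d) \<Rightarrow> nat \<Rightarrow> bool" where
  "r_good r k \<beta> \<mu> x i \<longleftrightarrow>
     (\<forall>j<k. j \<noteq> i \<longrightarrow> \<beta> \<bullet> x j \<le> \<beta> \<bullet> \<mu> i + r * norm \<beta>)"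

definition greedy_picks :: "nat \<Rightarrow> real^'d \<Rightarrow> (nat \<Rightarrow> real^'d) \<Rightarrow> nat \<Rightarrow> bool" where
  "greedy_picks k \<beta> x i \<longleftrightarrow> i < k \<and> (\<forall>j<k. \<beta> \<bullet> x j \<le> \<beta> \<bullet> x i)"

end

theory Submission
  imports Defs
begin

(*
  Fix the perturbations of all arms other than i. Then "Greedy picks i and the threshold is
  r-good" is either impossible or a halfspace {e. bh <= beta . e} in the perturbation e of arm i
  with bh <= r * |beta|, so (r, l0)-diversity bounds the quadratic form v . E[x x^T] v of this
  slice from below by l0 |v|^2. Integrating over the other arms (Fubini) gives the same bound for
  the whole conditioning event, and for a symmetric matrix such a lower bound on the Rayleigh
  quotient is equivalent to l0 <= lambda_min.
*)

lemma symmetric_matrix_inner_swap: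
  fixes M :: "real^'d^'d"
  assumes "transpose M = M"
  shows "v \<bullet> (M *v w) = w \<bullet> (M *v v)"
  by (metis assms dot_lmul_matrix inner_commute transpose_matrix_vector)

lemma linear_coeff_zero_if_quadratic_nonneg:
  fixes a b :: real
  assumes "\<And>t. 0 \<le> a * t + b * t^2"
  shows "a = 0"
proof (rule ccontr)
  assume "a \<noteq> 0"
  define s where "s = 1 / (\<bar>b\<bar> + 1)"
  have "s > 0" by (simp add: s_def add_pos_nonneg)
  have "b * s < 1"
    unfolding s_def by (simp add: divide_less_eq add_pos_nonneg, linarith)
  have "a * (- a * s) + b * (- a * s)^2 = a^2 * s * (b * s - 1)"
    by (simp add: power2_eq_square algebra_simps)
  also have "\<dots> < 0"
    using \<open>a \<noteq> 0\<close> \<open>s > 0\<close> \<open>b * s < 1\<close> by (intro mult_pos_neg) auto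
  finally show False using assms[of "- a * s"] by simp
qed

lemma quadratic_form_attains_min_on_sphere:
  fixes M :: "real^'d^'d"
  obtains u where "norm u = 1" "\<And>v. (u \<bullet> (M *v u)) * (v \<bullet> v) \<le> v \<bullet> (M *v v)"
proof -
  have cont: "continuous_on (sphere 0 1) (\<lambda>v::real^'d. v \<bullet> (M *v v))"
    by (intro continuous_intros bounded_linear.continuous_on[OF matrix_vector_mul_bounded_linear])
  obtain u where u: "u \<in> sphere 0 1"
    and min: "\<And>w. w \<in> sphere 0 1 \<Longrightarrow> u \<bullet> (M *v u) \<le> w \<bullet> (M *v w)"
    using continuous_attains_inf[OF compact_sphere _ cont] by (auto simp: sphere_eq_empty)
  have "(u \<bullet> (M *v u)) * (v \<bullet> v) \<le> v \<bullet> (M *v v)" for v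
  proof (cases "v = 0")
    case False
    have "u \<bullet> (M *v u) \<le> (v /\<^sub>R norm v) \<bullet> (M *v (v /\<^sub>R norm v))"
      using False by (intro min) simp
    also have "\<dots> = (v \<bullet> (M *v v)) / (v \<bullet> v)"
      by (simp add: matrix_vector_mult_scaleR power2_norm_eq_inner[symmetric] power2_eq_square divide_inverse)
    finally show ?thesis using False by (simp add: pos_le_divide_eq)
  qed simp
  then show ?thesis using that u by simp
qed

lemma eigenvector_if_minimizes_quadratic_form:
  fixes M :: "real^'d^'d"
  assumes sym: "transpose M = M"
    and min: "\<And>v. m * (v \<bullet> v) \<le> v \<bullet> (M *v v)"
    and attained: "u \<bullet> (M *v u) = m * (u \<bullet> u)"
  shows "M *v u = m *\<^sub>R u"
proof -
  \<comment> \<open>v \<bullet> (M *v v) - m * (v \<bullet> v) is nonnegative and vanishes at u, so its derivative at u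
    in every direction w vanishes.\<close>
  have "w \<bullet> (M *v u - m *\<^sub>R u) = 0" for w
  proof -
    have "0 \<le> (2 * (w \<bullet> (M *v u - m *\<^sub>R u))) * t + (w \<bullet> (M *v w) - m * (w \<bullet> w)) * t^2" for t
    proof -
      have "(u + t *\<^sub>R w) \<bullet> (M *v (u + t *\<^sub>R w)) - m * ((u + t *\<^sub>R w) \<bullet> (u + t *\<^sub>R w))
          = (2 * (w \<bullet> (M *v u - m *\<^sub>R u))) * t + (w \<bullet> (M *v w) - m * (w \<bullet> w)) * t^2"
        using attained symmetric_matrix_inner_swap[OF sym, of u w]
        by (simp add: matrix_vector_right_distrib matrix_vector_mult_scaleR inner_add inner_diff_right
            inner_commute[of u w] power2_eq_square algebra_simps)
      then show ?thesis using min[of "u + t *\<^sub>R w"] by linarith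
    qed
    then show ?thesis using linear_coeff_zero_if_quadratic_nonneg by fastforce
  qed
  then show ?thesis by (metis eq_iff_diff_eq_0 inner_eq_zero_iff)
qed

lemma finite_eigenvalues_symmetric:
  fixes M :: "real^'d^'d"
  assumes sym: "transpose M = M"
  shows "finite {l. \<exists>v. v \<noteq> 0 \<and> M *v v = l *\<^sub>R v}" (is "finite ?S")
proof -
  define vec where "vec l = (SOME v. v \<noteq> 0 \<and> M *v v = l *\<^sub>R v)" for l
  have vec: "vec l \<noteq> 0 \<and> M *v vec l = l *\<^sub>R vec l" if "l \<in> ?S" for l
    using someI_ex[OF that[simplified]] unfolding vec_def .
  have orth: "vec l \<bullet> vec l' = 0" if "l \<in> ?S" "l' \<in> ?S" "l \<noteq> l'" for l l'
  proof -
    have "l * (vec l' \<bullet> vec l) = vec l' \<bullet> (M *v vec l)" using vec[OF that(1)] by simp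
    also have "\<dots> = vec l \<bullet> (M *v vec l')" by (rule symmetric_matrix_inner_swap[OF sym])
    also have "\<dots> = l' * (vec l \<bullet> vec l')" using vec[OF that(2)] by simp
    finally show ?thesis using that(3) by (simp add: inner_commute)
  qed
  have "inj_on vec ?S"
  proof (rule inj_onI, rule ccontr)
    fix l l' assume "l \<in> ?S" "l' \<in> ?S" "vec l = vec l'" "l \<noteq> l'"
    then show False using orth[of l l'] vec[of l] by simp
  qed
  moreover have "independent (vec ` ?S)"
  proof (rule pairwise_orthogonal_independent)
    show "pairwise orthogonal (vec ` ?S)"
      unfolding pairwise_def orthogonal_def using orth by blast
    show "0 \<notin> vec ` ?S" using vec by fastforce
  qed
  ultimately show ?thesis
    using independent_imp_finite finite_imageD by blast
qed

lemma lambda_min_ge_iff: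
  fixes M :: "real^'d^'d"
  assumes sym: "transpose M = M"
  shows "c \<le> lambda_min M \<longleftrightarrow> (\<forall>v. c * (v \<bullet> v) \<le> v \<bullet> (M *v v))"
proof -
  let ?S = "{l. \<exists>v. v \<noteq> 0 \<and> M *v v = l *\<^sub>R v}"
  obtain u where u: "norm u = 1" and min: "\<And>v. (u \<bullet> (M *v u)) * (v \<bullet> v) \<le> v \<bullet> (M *v v)"
    using quadratic_form_attains_min_on_sphere[of M] by blast
  define m where "m = u \<bullet> (M *v u)"
  have "u \<bullet> u = 1" using u by (simp add: norm_eq_1)
  then have "M *v u = m *\<^sub>R u"
    using min by (intro eigenvector_if_minimizes_quadratic_form[OF sym]) (auto simp: m_def)
  then have "m \<in> ?S" using u by (auto intro!: exI[of _ u])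
  have eigenvalue_bound: "c \<le> l" if "l \<in> ?S" and "\<forall>v. c * (v \<bullet> v) \<le> v \<bullet> (M *v v)" for c l
  proof -
    obtain v where "v \<noteq> 0" "M *v v = l *\<^sub>R v" using \<open>l \<in> ?S\<close> by blast
    then show ?thesis using that(2)[rule_format, of v] by simp
  qed
  have "lambda_min M = m"
    unfolding lambda_min_def
    by (rule Min_eqI[OF finite_eigenvalues_symmetric[OF sym] _ \<open>m \<in> ?S\<close>])
      (use min eigenvalue_bound in \<open>auto simp: m_def\<close>)
  show ?thesis
  proof
    assume "c \<le> lambda_min M"
    then have "c * (v \<bullet> v) \<le> m * (v \<bullet> v)" for v
      using \<open>lambda_min M = m\<close> by (simp add: mult_right_mono)
    then show "\<forall>v. c * (v \<bullet> v) \<le> v \<bullet> (M *v v)"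
      using min order_trans unfolding m_def by blast
  qed (use eigenvalue_bound[OF \<open>m \<in> ?S\<close>] \<open>lambda_min M = m\<close> in simp)
qed

lemma lambda_min_zero: "lambda_min (0::real^'d^'d) = 0"
proof -
  have "{l. \<exists>v::real^'d. v \<noteq> 0 \<and> 0 *v v = l *\<^sub>R v} = {0}"
    using zero_neq_one[where 'a="real^'d"] by auto
  then show ?thesis by (simp add: lambda_min_def)
qed

lemma inner_outer_mult_vector: "v \<bullet> (outer x *v v) = (v \<bullet> x)^2"
proof -
  have "v \<bullet> (outer x *v v) = (\<Sum>a\<in>UNIV. \<Sum>b\<in>UNIV. (v$a * x$a) * (x$b * v$b))"
    by (simp add: outer_def matrix_vector_mult_def inner_vec_def sum_distrib_left algebra_simps)
  also have "\<dots> = (v \<bullet> x)^2"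
    by (simp add: sum_product[symmetric] inner_vec_def power2_eq_square mult.commute)
  finally show ?thesis .
qed

lemma transpose_outer: "transpose (outer x) = outer x"
  by (simp add: outer_def transpose_def vec_eq_iff mult.commute)

lemma bounded_linear_quadratic_form: "bounded_linear (\<lambda>N::real^'d^'d. v \<bullet> (N *v v))"
proof -
  have "linear (\<lambda>N::real^'d^'d. v \<bullet> (N *v v))"
    by (rule linearI) (simp_all add: matrix_vector_mult_add_rdistrib inner_add_right
        matrix_vector_mult_def inner_vec_def sum_distrib_left algebra_simps sum.distrib)
  then show ?thesis by (simp add: linear_conv_bounded_linear)
qed

lemma bounded_linear_transpose: "bounded_linear (transpose :: real^'d^'d \<Rightarrow> real^'d^'d)"
proof -
  have "linear (transpose :: real^'d^'d \<Rightarrow> real^'d^'d)"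
    by (rule linearI) (simp_all add: transpose_def vec_eq_iff)
  then show ?thesis by (simp add: linear_conv_bounded_linear)
qed

lemma transpose_cond_expect_on_outer:
  "transpose (cond_expect_on N B (\<lambda>\<omega>. outer (g \<omega>))) = cond_expect_on N B (\<lambda>\<omega>. outer (g \<omega>))"
proof -
  have "transpose (\<integral>\<omega>. indicator B \<omega> *\<^sub>R outer (g \<omega>) \<partial>N)
        = (\<integral>\<omega>. transpose (indicator B \<omega> *\<^sub>R outer (g \<omega>)) \<partial>N)"
    by (rule integral_bounded_linear'[OF bounded_linear_transpose bounded_linear_transpose, symmetric]) simp
  then show ?thesis
    unfolding cond_expect_on_def by (simp add: transpose_scalar transpose_outer)
qed

lemma quadratic_form_integral_outer:
  assumes "integrable N (\<lambda>\<omega>. f \<omega> *\<^sub>R outer (g \<omega>))"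
  shows "v \<bullet> ((\<integral>\<omega>. f \<omega> *\<^sub>R outer (g \<omega>) \<partial>N) *v v) = (\<integral>\<omega>. f \<omega> * (v \<bullet> g \<omega>)^2 \<partial>N)"
    and "integrable N (\<lambda>\<omega>. f \<omega> * (v \<bullet> g \<omega>)^2)"
  using integral_bounded_linear[OF bounded_linear_quadratic_form assms, of v]
    integrable_bounded_linear[OF bounded_linear_quadratic_form assms, of v]
  by (simp_all add: scaleR_matrix_vector_assoc[symmetric] inner_outer_mult_vector)

lemma cond_expect_on_outer_nonneg:
  "0 \<le> v \<bullet> (cond_expect_on N B (\<lambda>\<omega>. outer (g \<omega>)) *v v)"
proof (cases "integrable N (\<lambda>\<omega>. indicator B \<omega> *\<^sub>R outer (g \<omega>))")
  case True
  then show ?thesis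
    unfolding cond_expect_on_def
    by (simp add: scaleR_matrix_vector_assoc[symmetric] quadratic_form_integral_outer)
next
  case False
  then show ?thesis unfolding cond_expect_on_def by (simp add: not_integrable_integral_eq)
qed

lemma measure_scaleR_cond_expect_on:
  assumes "finite_measure N" and "B \<in> sets N"
  shows "measure N B *\<^sub>R cond_expect_on N B f = (\<integral>\<omega>. indicator B \<omega> *\<^sub>R f \<omega> \<partial>N)"
proof (cases "measure N B = 0")
  case True
  then have "B \<in> null_sets N"
    using assms by (simp add: finite_measure.emeasure_eq_measure null_sets_def)
  then have "(\<integral>\<omega>. indicator B \<omega> *\<^sub>R f \<omega> \<partial>N) = 0"
    by (intro integral_eq_zero_AE) (auto elim!: AE_mp[OF AE_not_in])
  then show ?thesis using True by simp
qed (simp add: cond_expect_on_def)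

lemma integral_indicator_quadratic_form:
  assumes "finite_measure N" and "B \<in> sets N" and "integrable N (\<lambda>\<omega>. outer (g \<omega>))"
  shows "integrable N (\<lambda>\<omega>. indicator B \<omega> * ((v \<bullet> g \<omega>)^2 - c))"
    and "(\<integral>\<omega>. indicator B \<omega> * ((v \<bullet> g \<omega>)^2 - c) \<partial>N)
       = measure N B * (v \<bullet> (cond_expect_on N B (\<lambda>\<omega>. outer (g \<omega>)) *v v) - c)"
proof -
  have int: "integrable N (\<lambda>\<omega>. indicator B \<omega> *\<^sub>R outer (g \<omega>))"
    by (rule integrable_mult_indicator[OF assms(2,3)])
  have int_indicator: "integrable N (indicator B :: _ \<Rightarrow> real)"
    using assms(1,2) by (simp add: finite_measure.integrable_const_bound[where B=1])
  then show "integrable N (\<lambda>\<omega>. indicator B \<omega> * ((v \<bullet> g \<omega>)^2 - c))"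
    using quadratic_form_integral_outer(2)[OF int, of v] by (simp add: right_diff_distrib)
  have "measure N B * (v \<bullet> (cond_expect_on N B (\<lambda>\<omega>. outer (g \<omega>)) *v v))
      = (\<integral>\<omega>. indicator B \<omega> * (v \<bullet> g \<omega>)^2 \<partial>N)"
    using measure_scaleR_cond_expect_on[OF assms(1,2), of "\<lambda>\<omega>. outer (g \<omega>)"]
      quadratic_form_integral_outer(1)[OF int, of v]
    by (metis inner_scaleR_right scaleR_matrix_vector_assoc)
  then show "(\<integral>\<omega>. indicator B \<omega> * ((v \<bullet> g \<omega>)^2 - c) \<partial>N)
       = measure N B * (v \<bullet> (cond_expect_on N B (\<lambda>\<omega>. outer (g \<omega>)) *v v) - c)"
    using assms(1,2) int_indicator quadratic_form_integral_outer(2)[OF int, of v]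
    by (simp add: right_diff_distrib finite_measure.emeasure_eq_measure)
qed

lemma diverse_integrable_outer:
  fixes D :: "(real^'d) measure"
  assumes div: "diverse r l0 D" and "0 < l0" and "norm m \<le> 1"
  shows "integrable D (\<lambda>e. outer (m + e))"
proof (rule ccontr)
  \<comment> \<open>Diversity with \<beta> = 0 conditions on the whole space; without integrability the conditional
    expectation takes the junk value 0, whose smallest eigenvalue 0 is below l0.\<close>
  assume not_int: "\<not> integrable D (\<lambda>e. outer (m + e))"
  let ?E = "{e \<in> space D. 0 \<le> (0::real^'d) \<bullet> e}"
  have "integrable D (\<lambda>e. indicator ?E e *\<^sub>R outer (m + e)) \<longleftrightarrow> integrable D (\<lambda>e. outer (m + e))"
    by (rule Bochner_Integration.integrable_cong) (auto simp: indicator_def)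
  then have "cond_expect_on D ?E (\<lambda>e. outer (m + e)) = 0"
    using not_int unfolding cond_expect_on_def by (simp add: not_integrable_integral_eq)
  moreover have "l0 \<le> lambda_min (cond_expect_on D ?E (\<lambda>e. outer (m + e)))"
    using div[unfolded diverse_def, rule_format, of m 0 0] \<open>norm m \<le> 1\<close> by simp
  ultimately show False using \<open>0 < l0\<close> by (simp add: lambda_min_zero)
qed

lemma diverse_halfspace_integral_nonneg:
  fixes D :: "(real^'d) measure"
  assumes "prob_space D" and sets: "sets D = sets borel"
    and div: "diverse r l0 D" and "norm m \<le> 1" and "bh \<le> r * norm b"
    and int: "integrable D (\<lambda>e. outer (m + e))"
  shows "0 \<le> (\<integral>y. indicator {e. bh \<le> b \<bullet> e} y * ((v \<bullet> (m + y))^2 - l0 * (v \<bullet> v)) \<partial>D)"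
proof -
  let ?H = "{e. bh \<le> b \<bullet> e}"
  let ?C = "cond_expect_on D ?H (\<lambda>e. outer (m + e))"
  have "space D = UNIV" using sets_eq_imp_space_eq[OF sets] by simp
  then have "l0 \<le> lambda_min ?C"
    using div \<open>norm m \<le> 1\<close> \<open>bh \<le> r * norm b\<close> unfolding diverse_def by auto
  then have "l0 * (v \<bullet> v) \<le> v \<bullet> (?C *v v)"
    using lambda_min_ge_iff[OF transpose_cond_expect_on_outer] by blast
  moreover have "?H \<in> sets D"
    unfolding sets by (simp add: closed_halfspace_ge borel_closed inner_commute)
  ultimately show ?thesis
    using integral_indicator_quadratic_form(2)[OF prob_space.finite_measure[OF \<open>prob_space D\<close>] _ int]
    by simp
qed

lemma finite_thresholds_halfspace:
  fixes \<beta> :: "real^'d"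
  assumes "finite T" and "\<forall>t\<in>T. t \<le> r * norm \<beta>"
  obtains b bh where "bh \<le> r * norm b" and "{y. \<forall>t\<in>T. t \<le> \<beta> \<bullet> y} = {y. bh \<le> b \<bullet> y}"
proof (cases "T = {}")
  case True
  \<comment> \<open>No other arm: the whole space, written as the degenerate halfspace with b = 0.\<close>
  then show ?thesis using that[of 0 0] by simp
next
  case False
  then show ?thesis using that[of "Max T" \<beta>] assms by simp
qed

lemma greedy_good_section:
  assumes "i < k"
  obtains "{y. greedy_picks k \<beta> (\<lambda>j. \<mu> j + (x(i := y)) j) i \<and> r_good r k \<beta> \<mu> (\<lambda>j. \<mu> j + (x(i := y)) j) i} = {}"
  | b bh where "bh \<le> r * norm b"
    and "{y. greedy_picks k \<beta> (\<lambda>j. \<mu> j + (x(i := y)) j) i \<and> r_good r k \<beta> \<mu> (\<lambda>j. \<mu> j + (x(i := y)) j) i}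
         = {y. bh \<le> b \<bullet> y}"
proof -
  define T where "T = (\<lambda>j. \<beta> \<bullet> (\<mu> j + x j) - \<beta> \<bullet> \<mu> i) ` ({..<k} - {i})"
  have greedy: "greedy_picks k \<beta> (\<lambda>j. \<mu> j + (x(i := y)) j) i \<longleftrightarrow> (\<forall>t\<in>T. t \<le> \<beta> \<bullet> y)" for y
    using assms by (force simp: greedy_picks_def T_def inner_add_right)
  have good: "r_good r k \<beta> \<mu> (\<lambda>j. \<mu> j + (x(i := y)) j) i \<longleftrightarrow> (\<forall>t\<in>T. t \<le> r * norm \<beta>)" for y
    by (force simp: r_good_def T_def)
  show thesis
  proof (cases "\<forall>t\<in>T. t \<le> r * norm \<beta>")
    case True
    have "finite T" by (simp add: T_def)
    obtain b bh where "bh \<le> r * norm b" "{y. \<forall>t\<in>T. t \<le> \<beta> \<bullet> y} = {y. bh \<le> b \<bullet> y}"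
      by (rule finite_thresholds_halfspace[OF \<open>finite T\<close> True])
    then show thesis using that(2) True greedy good by simp
  qed (use that(1) good in simp)
qed

lemma greedy_good_section_integral_nonneg:
  fixes D :: "(real^'d) measure"
  assumes "i < k" and "prob_space D" and "sets D = sets borel"
    and "diverse r l0 D" and "norm (\<mu> i) \<le> 1" and int: "integrable D (\<lambda>e. outer (\<mu> i + e))"
  shows "0 \<le> (\<integral>y. indicator {y. greedy_picks k \<beta> (\<lambda>j. \<mu> j + (x(i := y)) j) i
                                 \<and> r_good r k \<beta> \<mu> (\<lambda>j. \<mu> j + (x(i := y)) j) i} y
                    * ((v \<bullet> (\<mu> i + y))^2 - l0 * (v \<bullet> v)) \<partial>D)"
proof (cases rule: greedy_good_section[OF \<open>i < k\<close>, where \<beta>=\<beta> and \<mu>=\<mu> and x=x and r=r])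
  case (2 b bh)
  then show ?thesis
    using diverse_halfspace_integral_nonneg[OF assms(2-5) _ int] by simp
qed simp

lemma PiM_integral_nonneg_sections:
  fixes M :: "'i \<Rightarrow> 'a measure" and f :: "('i \<Rightarrow> 'a) \<Rightarrow> real"
  assumes "finite I" and "i \<in> I" and sigma_finite: "\<And>j. j \<in> I \<Longrightarrow> sigma_finite_measure (M j)"
    and int: "integrable (Pi\<^sub>M I M) f"
    and sections: "\<And>x. x \<in> space (Pi\<^sub>M (I - {i}) M) \<Longrightarrow> 0 \<le> (\<integral>y. f (x(i := y)) \<partial>M i)"
  shows "0 \<le> (\<integral>\<omega>. f \<omega> \<partial>Pi\<^sub>M I M)"
proof -
  \<comment> \<open>The product locale needs every factor sigma-finite, so pad with copies of M i.\<close>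
  define M' where "M' j = (if j \<in> I then M j else M i)" for j
  interpret product_sigma_finite M'
    unfolding product_sigma_finite_def M'_def using sigma_finite \<open>i \<in> I\<close> by auto
  have PiM_eq: "Pi\<^sub>M J M' = Pi\<^sub>M J M" if "J \<subseteq> I" for J
    using that by (intro PiM_cong) (auto simp: M'_def)
  have I: "insert i (I - {i}) = I" using \<open>i \<in> I\<close> by auto
  have "(\<integral>\<omega>. f \<omega> \<partial>Pi\<^sub>M I M) = (\<integral>x. (\<integral>y. f (x(i := y)) \<partial>M' i) \<partial>Pi\<^sub>M (I - {i}) M')"
    using product_integral_insert[of "I - {i}" i f] int \<open>finite I\<close> unfolding I PiM_eq[OF order_refl] by simp
  also have "\<dots> = (\<integral>x. (\<integral>y. f (x(i := y)) \<partial>M i) \<partial>Pi\<^sub>M (I - {i}) M)"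
    using \<open>i \<in> I\<close> by (simp add: M'_def PiM_eq)
  finally show ?thesis
    using sections by (simp add: integral_nonneg)
qed

lemma measurable_PiM_component_borel:
  assumes "\<And>j. j \<in> I \<Longrightarrow> sets (M j) = sets (borel :: 'a::topological_space measure)"
  shows "(\<lambda>\<omega>. \<omega> j) \<in> borel_measurable (Pi\<^sub>M I M)"
proof (cases "j \<in> I")
  case True
  then have "(\<lambda>\<omega>. \<omega> j) \<in> measurable (Pi\<^sub>M I M) (M j)" by simp
  then show ?thesis using assms[OF True] by (simp cong: measurable_cong_sets)
next
  case False
  have "(\<lambda>\<omega>. undefined) \<in> borel_measurable (Pi\<^sub>M I M)" by simp
  then show ?thesis
    by (rule measurable_cong[THEN iffD1, rotated]) (use False in \<open>auto simp: space_PiM PiE_def extensional_def\<close>)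
qed

lemma integrable_PiM_component:
  fixes f :: "'a \<Rightarrow> 'b::{banach, second_countable_topology}"
  assumes "\<And>j. j \<in> I \<Longrightarrow> prob_space (M j)" and "i \<in> I" and "integrable (M i) f"
  shows "integrable (Pi\<^sub>M I M) (\<lambda>\<omega>. f (\<omega> i))"
proof -
  have "integrable (distr (Pi\<^sub>M I M) (M i) (\<lambda>\<omega>. \<omega> i)) f"
    using assms by (simp add: distr_PiM_component)
  then show ?thesis
    using \<open>i \<in> I\<close> \<open>integrable (M i) f\<close> by (subst (asm) integrable_distr_eq) auto
qed

lemma greedy_good_event_sets:
  fixes D :: "nat \<Rightarrow> (real^'d) measure"
  assumes "\<And>j. j < k \<Longrightarrow> sets (D j) = sets borel"
  shows "{\<omega> \<in> space (Pi\<^sub>M {..<k} D).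
            greedy_picks k \<beta> (\<lambda>j. \<mu> j + \<omega> j) i \<and> r_good r k \<beta> \<mu> (\<lambda>j. \<mu> j + \<omega> j) i}
         \<in> sets (Pi\<^sub>M {..<k} D)"
proof -
  note [measurable] = measurable_PiM_component_borel[of "{..<k}" D, simplified, OF assms]
  have inner_meas: "(\<lambda>\<omega>. \<beta> \<bullet> (\<mu> j + \<omega> j)) \<in> borel_measurable (Pi\<^sub>M {..<k} D)" for j
    by measurable
  have "Measurable.pred (Pi\<^sub>M {..<k} D) (\<lambda>\<omega>. \<beta> \<bullet> (\<mu> j + \<omega> j) \<le> \<beta> \<bullet> (\<mu> i + \<omega> i))" for j
    unfolding pred_def by (rule borel_measurable_le[OF inner_meas inner_meas])
  moreover have "Measurable.pred (Pi\<^sub>M {..<k} D) (\<lambda>\<omega>. \<beta> \<bullet> (\<mu> j + \<omega> j) \<le> \<beta> \<bullet> \<mu> i + r * norm \<beta>)" for j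
    using inner_meas[of j] by measurable
  ultimately have "Measurable.pred (Pi\<^sub>M {..<k} D)
          (\<lambda>\<omega>. greedy_picks k \<beta> (\<lambda>j. \<mu> j + \<omega> j) i \<and> r_good r k \<beta> \<mu> (\<lambda>j. \<mu> j + \<omega> j) i)"
    unfolding greedy_picks_def r_good_def
    by (intro pred_intros_logic pred_intros_countable allI measurable_const) simp_all
  then show ?thesis by (simp add: pred_def)
qed

lemma greedy_good_cond_expect_quadratic_form_ge:
  fixes k :: nat and i :: nat and r l0 :: real
    and \<beta> :: "real^'d" and \<mu> :: "nat \<Rightarrow> real^'d"
    and D :: "nat \<Rightarrow> (real^'d) measure"
  defines "A \<equiv> {\<omega> \<in> space (\<Pi>\<^sub>M j\<in>{..<k}. D j).
                 greedy_picks k \<beta> (\<lambda>j. \<mu> j + \<omega> j) i \<and> r_good r k \<beta> \<mu> (\<lambda>j. \<mu> j + \<omega> j) i}"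
  assumes i: "i < k"
    and mu_bd: "\<And>j. j < k \<Longrightarrow> norm (\<mu> j) \<le> 1"
    and D_prob: "\<And>j. j < k \<Longrightarrow> prob_space (D j)"
    and D_sets: "\<And>j. j < k \<Longrightarrow> sets (D j) = sets borel"
    and D_div: "\<And>j. j < k \<Longrightarrow> diverse r l0 (D j)"
    and int: "integrable (D i) (\<lambda>e. outer (\<mu> i + e))"
    and pos: "measure (\<Pi>\<^sub>M j\<in>{..<k}. D j) A > 0"
  shows "l0 * (v \<bullet> v) \<le> v \<bullet> (cond_expect_on (\<Pi>\<^sub>M j\<in>{..<k}. D j) A (\<lambda>\<omega>. outer (\<mu> i + \<omega> i)) *v v)"
proof -
  let ?P = "\<Pi>\<^sub>M j\<in>{..<k}. D j"
  have "finite_measure ?P"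
    by (intro prob_space.finite_measure prob_space_PiM) (use D_prob in auto)
  moreover have "A \<in> sets ?P" unfolding A_def by (rule greedy_good_event_sets[OF D_sets])
  moreover have "integrable ?P (\<lambda>\<omega>. outer (\<mu> i + \<omega> i))"
    by (rule integrable_PiM_component[where M=D]) (use D_prob i int in auto)
  ultimately have quadratic_form:
    "integrable ?P (\<lambda>\<omega>. indicator A \<omega> * ((v \<bullet> (\<mu> i + \<omega> i))^2 - l0 * (v \<bullet> v)))"
    "(\<integral>\<omega>. indicator A \<omega> * ((v \<bullet> (\<mu> i + \<omega> i))^2 - l0 * (v \<bullet> v)) \<partial>?P)
       = measure ?P A * (v \<bullet> (cond_expect_on ?P A (\<lambda>\<omega>. outer (\<mu> i + \<omega> i)) *v v) - l0 * (v \<bullet> v))"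
    by (auto intro: integral_indicator_quadratic_form)
  have section_nonneg:
    "0 \<le> (\<integral>y. indicator A (x(i := y)) * ((v \<bullet> (\<mu> i + (x(i := y)) i))^2 - l0 * (v \<bullet> v)) \<partial>D i)"
    if x: "x \<in> space (\<Pi>\<^sub>M j\<in>{..<k} - {i}. D j)" for x
  proof -
    let ?S = "{y. greedy_picks k \<beta> (\<lambda>j. \<mu> j + (x(i := y)) j) i \<and> r_good r k \<beta> \<mu> (\<lambda>j. \<mu> j + (x(i := y)) j) i}"
    have "space (D i) = UNIV" using sets_eq_imp_space_eq[OF D_sets[OF i]] by simp
    then have "x(i := y) \<in> space ?P" for y
      using x i by (auto simp: space_PiM PiE_def extensional_def)
    then have "indicator A (x(i := y)) = (indicator ?S y :: real)" for y
      unfolding A_def by (simp add: indicator_def)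
    then show ?thesis
      using greedy_good_section_integral_nonneg[where \<mu>=\<mu>, OF i D_prob[OF i] D_sets[OF i] D_div[OF i] mu_bd[OF i] int]
      by simp
  qed
  have "0 \<le> (\<integral>\<omega>. indicator A \<omega> * ((v \<bullet> (\<mu> i + \<omega> i))^2 - l0 * (v \<bullet> v)) \<partial>?P)"
    by (rule PiM_integral_nonneg_sections[OF _ _ _ quadratic_form(1) section_nonneg])
      (use i D_prob in \<open>auto intro: prob_space_imp_sigma_finite\<close>)
  then have "0 \<le> v \<bullet> (cond_expect_on ?P A (\<lambda>\<omega>. outer (\<mu> i + \<omega> i)) *v v) - l0 * (v \<bullet> v)"
    unfolding quadratic_form(2) using pos by (meson mult_pos_neg not_le)
  then show ?thesis by simp
qed

theorem lemma2:
  fixes k :: nat and i :: nat and r l0 :: real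
    and \<beta> :: "real^'d" and \<mu> :: "nat \<Rightarrow> real^'d"
    and D :: "nat \<Rightarrow> (real^'d) measure"
  assumes i: "i < k"
    and mu_bd: "\<And>j. j < k \<Longrightarrow> norm (\<mu> j) \<le> 1"
    and D_prob: "\<And>j. j < k \<Longrightarrow> prob_space (D j)"
    and D_sets: "\<And>j. j < k \<Longrightarrow> sets (D j) = sets borel"
    and D_mean0: "\<And>j. j < k \<Longrightarrow> integrable (D j) (\<lambda>e. e) \<and> (\<integral>e. e \<partial>D j) = 0"
    and D_div: "\<And>j. j < k \<Longrightarrow> diverse r l0 (D j)"
    and pos: "measure (\<Pi>\<^sub>M j\<in>{..<k}. D j)
               {\<omega> \<in> space (\<Pi>\<^sub>M j\<in>{..<k}. D j).
                  greedy_picks k \<beta> (\<lambda>j. \<mu> j + \<omega> j) i \<and> r_good r k \<beta> \<mu> (\<lambda>j. \<mu> j + \<omega> j) i} > 0"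
  shows "l0 \<le> lambda_min
           (cond_expect_on (\<Pi>\<^sub>M j\<in>{..<k}. D j)
              {\<omega> \<in> space (\<Pi>\<^sub>M j\<in>{..<k}. D j).
                 greedy_picks k \<beta> (\<lambda>j. \<mu> j + \<omega> j) i \<and> r_good r k \<beta> \<mu> (\<lambda>j. \<mu> j + \<omega> j) i}
              (\<lambda>\<omega>. outer (\<mu> i + \<omega> i)))"
proof -
  let ?C = "cond_expect_on (\<Pi>\<^sub>M j\<in>{..<k}. D j)
              {\<omega> \<in> space (\<Pi>\<^sub>M j\<in>{..<k}. D j).
                 greedy_picks k \<beta> (\<lambda>j. \<mu> j + \<omega> j) i \<and> r_good r k \<beta> \<mu> (\<lambda>j. \<mu> j + \<omega> j) i}
              (\<lambda>\<omega>. outer (\<mu> i + \<omega> i))"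
  have "l0 * (v \<bullet> v) \<le> v \<bullet> (?C *v v)" for v
  proof (cases "0 < l0")
    case True
    have "integrable (D i) (\<lambda>e. outer (\<mu> i + e))"
      by (rule diverse_integrable_outer[OF D_div[OF i] True mu_bd[OF i]])
    then show ?thesis
      using greedy_good_cond_expect_quadratic_form_ge[OF i mu_bd D_prob D_sets D_div _ pos] by simp
  next
    case False
    then have "l0 * (v \<bullet> v) \<le> 0" by (simp add: mult_nonpos_nonneg)
    also have "0 \<le> v \<bullet> (?C *v v)" by (rule cond_expect_on_outer_nonneg)
    finally show ?thesis .
  qed
  then show ?thesis by (subst lambda_min_ge_iff[OF transpose_cond_expect_on_outer]) blast
qed

end
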